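(* Let $F$ be a forest and $t$ a positive constant. Then there exists a (zero,degree)-assignment $\tau'$ for $F$ with $\overline{\tau'}\le t$ and $Ldyn_t(F)=dyn_{\tau'}(F)$.
   Context: A threshold assignment is a function $\tau:V(F)\to\{0,1,2,\dots\}$ with $\tau(v)\le deg_F(v)$ for every $v$; $\overline{\tau}=\sum_v\tau(v)/|V(F)|$. A (zero,degree)-assignment is one with $\tau(v)\in\{0,deg_F(v)\}$ for every vertex $v$. A set $D\subseteq V(F)$ is a $\tau$-dynamo if $V(F)$ can be partitioned into $D_0=D,D_1,\dots,D_k$ such that for each $1\le i\le k$, $D_i$ consists of all vertices not in $D_0\cup\dots\cup D_{i-1}$ having at least $\tau(v)$ neighbors in $D_0\cup\dots\cup D_{i-1}$; $dyn_\tau(F)$ is the minimum size of a $\tau$-dynamo. $Ldyn_t(F)=\max\{dyn_\tau(F):\overline{\tau}\le t\}$. *)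

theory Defs
  imports Main "HOL-Library.Sublist" Complex_Main
begin

definition simple_graph :: "'a set \<Rightarrow> ('a \<Rightarrow> 'a \<Rightarrow> bool) \<Rightarrow> bool" where
  "simple_graph V E \<longleftrightarrow> finite V \<and> (\<forall>u v. E u v \<longrightarrow> u \<in> V \<and> v \<in> V)
     \<and> (\<forall>u v. E u v \<longrightarrow> E v u) \<and> (\<forall>v. \<not> E v v)"

definition has_cycle :: "'a set \<Rightarrow> ('a \<Rightarrow> 'a \<Rightarrow> bool) \<Rightarrow> bool" where
  "has_cycle V E \<longleftrightarrow> (\<exists>cs. length cs \<ge> 3 \<and> distinct cs \<and> set cs \<subseteq> V
     \<and> (\<forall>i. Suc i < length cs \<longrightarrow> E (cs ! i) (cs ! Suc i))
     \<and> E (last cs) (hd cs))"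

definition forest :: "'a set \<Rightarrow> ('a \<Rightarrow> 'a \<Rightarrow> bool) \<Rightarrow> bool" where
  "forest V E \<longleftrightarrow> simple_graph V E \<and> \<not> has_cycle V E"

definition deg :: "'a set \<Rightarrow> ('a \<Rightarrow> 'a \<Rightarrow> bool) \<Rightarrow> 'a \<Rightarrow> nat" where
  "deg V E v = card {u \<in> V. E v u}"

definition threshold_assignment :: "'a set \<Rightarrow> ('a \<Rightarrow> 'a \<Rightarrow> bool) \<Rightarrow> ('a \<Rightarrow> nat) \<Rightarrow> bool" where
  "threshold_assignment V E \<tau> \<longleftrightarrow> (\<forall>v\<in>V. \<tau> v \<le> deg V E v)"

definition zero_degree_assignment :: "'a set \<Rightarrow> ('a \<Rightarrow> 'a \<Rightarrow> bool) \<Rightarrow> ('a \<Rightarrow> nat) \<Rightarrow> bool" where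
  "zero_degree_assignment V E \<tau> \<longleftrightarrow> (\<forall>v\<in>V. \<tau> v = 0 \<or> \<tau> v = deg V E v)"

definition avg_tau :: "'a set \<Rightarrow> ('a \<Rightarrow> nat) \<Rightarrow> real" where
  "avg_tau V \<tau> = real (\<Sum>v\<in>V. \<tau> v) / real (card V)"

definition dyn_step :: "'a set \<Rightarrow> ('a \<Rightarrow> 'a \<Rightarrow> bool) \<Rightarrow> ('a \<Rightarrow> nat) \<Rightarrow> 'a set \<Rightarrow> 'a set" where
  "dyn_step V E \<tau> S = S \<union> {v \<in> V - S. card {u \<in> S. E v u} \<ge> \<tau> v}"

definition is_dynamo :: "'a set \<Rightarrow> ('a \<Rightarrow> 'a \<Rightarrow> bool) \<Rightarrow> ('a \<Rightarrow> nat) \<Rightarrow> 'a set \<Rightarrow> bool" where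
  "is_dynamo V E \<tau> D \<longleftrightarrow> D \<subseteq> V \<and> (\<exists>k. (dyn_step V E \<tau> ^^ k) D = V)"

definition dyn :: "'a set \<Rightarrow> ('a \<Rightarrow> 'a \<Rightarrow> bool) \<Rightarrow> ('a \<Rightarrow> nat) \<Rightarrow> nat" where
  "dyn V E \<tau> = (LEAST n. \<exists>D. is_dynamo V E \<tau> D \<and> card D = n)"

definition Ldyn :: "'a set \<Rightarrow> ('a \<Rightarrow> 'a \<Rightarrow> bool) \<Rightarrow> real \<Rightarrow> nat" where
  "Ldyn V E t = Max {dyn V E \<tau> | \<tau>. threshold_assignment V E \<tau> \<and> avg_tau V \<tau> \<le> t}"

end

theory Submission
  imports Defs
begin

text \<open>
  Take \<open>\<tau>\<close> attaining \<open>Ldyn\<^sub>t(F)\<close>. Peeling off vertices of threshold \<open>0\<close> and leaves, one finds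
  a \<open>\<tau>\<close>-dynamo \<open>D\<close> together with a matching \<open>d \<mapsto> m d\<close> of \<open>D\<close> into \<open>V - D\<close> whose matched
  vertices have total degree at most \<open>\<Sum>\<tau>\<close>. Setting \<open>\<tau>' = deg\<close> on the matched vertices and \<open>0\<close>
  elsewhere keeps the average below \<open>t\<close>; and since two adjacent vertices whose thresholds are
  their degrees can never activate each other, every \<open>\<tau>'\<close>-dynamo contains an endpoint of each
  matched edge. Hence \<open>dyn\<^sub>\<tau>'(F) \<ge> |D| \<ge> dyn\<^sub>\<tau>(F) = Ldyn\<^sub>t(F)\<close>.
\<close>

definition graph_path :: "'a set \<Rightarrow> ('a \<Rightarrow> 'a \<Rightarrow> bool) \<Rightarrow> 'a list \<Rightarrow> bool" where
  "graph_path V E xs \<longleftrightarrow> xs \<noteq> [] \<and> distinct xs \<and> set xs \<subseteq> V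
     \<and> (\<forall>i. Suc i < length xs \<longrightarrow> E (xs ! i) (xs ! Suc i))"

lemma graph_path_Cons:
  assumes "graph_path V E xs" "y \<in> V" "y \<notin> set xs" "E y (hd xs)"
  shows "graph_path V E (y # xs)"
  unfolding graph_path_def
proof (intro conjI allI impI)
  fix i assume "Suc i < length (y # xs)"
  then show "E ((y # xs) ! i) ((y # xs) ! Suc i)"
    using assms by (cases i) (auto simp: graph_path_def hd_conv_nth)
qed (use assms in \<open>auto simp: graph_path_def\<close>)

lemma longest_graph_path_exists:
  assumes "finite V" "V \<noteq> {}"
  shows "\<exists>xs. graph_path V E xs \<and> (\<forall>ys. graph_path V E ys \<longrightarrow> length ys \<le> length xs)"
proof -
  obtain a where "a \<in> V" using assms(2) by blast
  then have "graph_path V E [a]" by (simp add: graph_path_def)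
  moreover have "length ys < Suc (card V)" if "graph_path V E ys" for ys
    using that distinct_card card_mono[OF assms(1)] unfolding graph_path_def
    by (metis le_imp_less_Suc)
  ultimately show ?thesis
    using Lattices_Big.ex_has_greatest_nat[of "graph_path V E" "[a]" length "Suc (card V)"] by blast
qed

lemma has_cycle_if_path_closes:
  assumes "graph_path V E xs" "2 \<le> j" "j < length xs" "E (xs ! j) (hd xs)"
  shows "has_cycle V E"
  unfolding has_cycle_def
proof (intro exI conjI)
  let ?cs = "take (Suc j) xs"
  show "3 \<le> length ?cs" "distinct ?cs" "set ?cs \<subseteq> V"
    using assms set_take_subset[of "Suc j" xs] by (auto simp: graph_path_def)
  show "\<forall>i. Suc i < length ?cs \<longrightarrow> E (?cs ! i) (?cs ! Suc i)"
    using assms(1) by (auto simp: graph_path_def)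
  show "E (last ?cs) (hd ?cs)"
  proof -
    have "last ?cs = xs ! j" using assms(3) by (simp add: last_conv_nth take_Suc_conv_app_nth)
    then show ?thesis using assms(4) by simp
  qed
qed

lemma acyclic_graph_has_leaf:
  assumes fin: "finite V" and "V \<noteq> {}" and "symp E" and "irreflp E" and "\<not> has_cycle V E"
  shows "\<exists>v\<in>V. deg V E v \<le> 1"
proof (rule ccontr)
  assume "\<not> ?thesis"
  then have deg2: "2 \<le> deg V E v" if "v \<in> V" for v using that by force
  obtain xs where path: "graph_path V E xs"
    and longest: "\<And>ys. graph_path V E ys \<Longrightarrow> length ys \<le> length xs"
    using longest_graph_path_exists[OF fin \<open>V \<noteq> {}\<close>] by blast
  let ?x = "hd xs"
  let ?N = "{w\<in>V. E ?x w}"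
  have "?x \<in> V" using path by (auto simp: graph_path_def)
  then have "2 \<le> card ?N" using deg2 by (simp add: deg_def)
  then have "card (?N - {xs ! 1}) \<noteq> 0" by (simp add: card_Diff_singleton_if)
  then obtain y where "y \<in> ?N - {xs ! 1}" by (metis card.empty ex_in_conv)
  then have y: "y \<in> V" "E ?x y" "y \<noteq> xs ! 1" by auto
  have "y \<in> set xs"
  proof (rule ccontr)
    assume "y \<notin> set xs"
    with path y \<open>symp E\<close> have "graph_path V E (y # xs)" by (blast intro: graph_path_Cons sympD)
    from longest[OF this] show False by simp
  qed
  then obtain j where j: "j < length xs" "xs ! j = y" by (auto simp: in_set_conv_nth)
  have "j \<noteq> 0" using j y \<open>irreflp E\<close> path by (metis graph_path_def hd_conv_nth irreflpD)
  moreover have "j \<noteq> 1" using j y by auto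
  ultimately have "2 \<le> j" by simp
  with path j y \<open>symp E\<close> show False
    using has_cycle_if_path_closes \<open>\<not> has_cycle V E\<close> by (metis sympD)
qed

lemma has_cycle_mono: "V' \<subseteq> V \<Longrightarrow> has_cycle V' E \<Longrightarrow> has_cycle V E"
  unfolding has_cycle_def by blast

lemma funpow_dyn_step_subset: "D \<subseteq> V \<Longrightarrow> (dyn_step V E \<tau> ^^ k) D \<subseteq> V"
  by (induction k) (auto simp: dyn_step_def)

definition ranked_dynamo :: "'a set \<Rightarrow> ('a \<Rightarrow> 'a \<Rightarrow> bool) \<Rightarrow> ('a \<Rightarrow> nat) \<Rightarrow> ('a \<Rightarrow> nat) \<Rightarrow> 'a set \<Rightarrow> bool" where
  "ranked_dynamo V E \<tau> r D \<longleftrightarrow> D \<subseteq> V \<and> (\<forall>w\<in>V - D. \<tau> w \<le> card {x\<in>V. E w x \<and> r x < r w})"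

lemma ranked_dynamo_activates_ranks_below:
  assumes fin: "finite V" and rd: "ranked_dynamo V E \<tau> r D"
  shows "{w\<in>V. r w < k} \<subseteq> (dyn_step V E \<tau> ^^ k) D"
proof (induction k)
  case (Suc k)
  let ?S = "(dyn_step V E \<tau> ^^ k) D"
  show ?case
  proof
    fix w assume w: "w \<in> {w\<in>V. r w < Suc k}"
    show "w \<in> (dyn_step V E \<tau> ^^ Suc k) D"
    proof (cases "w \<in> ?S \<or> w \<in> D")
      case True
      moreover have "D \<subseteq> ?S" by (induction k) (auto simp: dyn_step_def)
      ultimately show ?thesis by (auto simp: dyn_step_def)
    next
      case False
      have "{x\<in>V. E w x \<and> r x < r w} \<subseteq> {u\<in>?S. E w u}" using Suc.IH w by auto
      moreover have "finite ?S"
        using funpow_dyn_step_subset rd fin finite_subset by (metis ranked_dynamo_def)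
      ultimately have "card {x\<in>V. E w x \<and> r x < r w} \<le> card {u\<in>?S. E w u}"
        by (intro card_mono) auto
      moreover have "\<tau> w \<le> card {x\<in>V. E w x \<and> r x < r w}"
        using rd w False by (auto simp: ranked_dynamo_def)
      ultimately have "\<tau> w \<le> card {u\<in>?S. E w u}" by (rule order_trans[rotated])
      with False w show ?thesis by (simp add: dyn_step_def)
    qed
  qed
qed simp

lemma is_dynamo_if_ranked:
  assumes fin: "finite V" and rd: "ranked_dynamo V E \<tau> r D"
  shows "is_dynamo V E \<tau> D"
proof -
  let ?k = "Suc (Max (r ` V))"
  have "V \<subseteq> (dyn_step V E \<tau> ^^ ?k) D"
    using ranked_dynamo_activates_ranks_below[OF assms, of ?k] fin by (auto simp: le_imp_less_Suc)
  with rd funpow_dyn_step_subset show ?thesis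
    unfolding is_dynamo_def ranked_dynamo_def by blast
qed

lemma ranked_dynamo_insert:
  assumes fin: "finite V" and "v \<in> V" and "D \<subseteq> V"
    and rd: "ranked_dynamo (V - {v}) E \<tau>' r' (D - {v})"
    and mono: "\<And>x w. x \<in> V - {v} \<Longrightarrow> w \<in> V - {v} \<Longrightarrow> r' x < r' w \<Longrightarrow> r x < r w"
    and old: "\<And>w. w \<in> V - {v} - D \<Longrightarrow> \<tau> w \<le> \<tau>' w + (if E w v \<and> r v < r w then 1 else 0)"
    and new: "v \<in> V - D \<Longrightarrow> \<tau> v \<le> card {x\<in>V. E v x \<and> r x < r v}"
  shows "ranked_dynamo V E \<tau> r D"
  unfolding ranked_dynamo_def
proof (intro conjI ballI)
  fix w assume w: "w \<in> V - D"
  show "\<tau> w \<le> card {x\<in>V. E w x \<and> r x < r w}"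
  proof (cases "w = v")
    case False
    let ?A = "{x\<in>V - {v}. E w x \<and> r' x < r' w}"
    let ?B = "?A \<union> {x. x = v \<and> E w v \<and> r v < r w}"
    have "\<tau>' w \<le> card ?A" using rd w False by (auto simp: ranked_dynamo_def)
    moreover have "card ?B = card ?A + (if E w v \<and> r v < r w then 1 else 0)"
      using fin by (auto simp: card_insert_if)
    moreover have "card ?B \<le> card {x\<in>V. E w x \<and> r x < r w}"
      using fin w mono False \<open>v \<in> V\<close> by (intro card_mono) auto
    ultimately show ?thesis using old[of w] w False by simp
  qed (use w new in simp)
qed (use assms in simp)

lemma full_threshold_activated_after_neighbour:
  assumes fin: "finite V" and "D \<subseteq> V" and "(dyn_step V E \<tau> ^^ K) D = V"
    and x: "x \<in> V - D" "\<tau> x = deg V E x" and y: "y \<in> V" "E x y"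
  shows "(LEAST k. y \<in> (dyn_step V E \<tau> ^^ k) D) < (LEAST k. x \<in> (dyn_step V E \<tau> ^^ k) D)"
proof -
  define S where "S k = (dyn_step V E \<tau> ^^ k) D" for k
  have "S K = V" using assms(3) by (simp add: S_def)
  define i where "i = (LEAST k. x \<in> S k)"
  have "x \<in> S i" unfolding i_def using x \<open>S K = V\<close> by (metis DiffD1 LeastI)
  moreover have "x \<notin> S 0" using x by (simp add: S_def)
  ultimately obtain p where p: "i = Suc p" by (cases i) auto
  then have "x \<notin> S p" unfolding i_def by (metis lessI not_less_Least)
  with \<open>x \<in> S i\<close> p have "deg V E x \<le> card {u\<in>S p. E x u}"
    using x by (auto simp: S_def dyn_step_def)
  moreover have "S p \<subseteq> V" using funpow_dyn_step_subset \<open>D \<subseteq> V\<close> by (simp add: S_def)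
  ultimately have "{u\<in>S p. E x u} = {u\<in>V. E x u}"
    using fin by (intro card_seteq) (auto simp: deg_def)
  with y have "y \<in> S p" by auto
  then have "(LEAST k. y \<in> S k) \<le> p" by (rule Least_le)
  then show ?thesis using p i_def by (simp add: S_def)
qed

text \<open>Two adjacent vertices whose thresholds equal their degrees each wait for the other,
  so a dynamo must contain one of them.\<close>

lemma dynamo_meets_full_threshold_edge:
  assumes "finite V" "symp E" "is_dynamo V E \<tau> D" "E x y" "x \<in> V" "y \<in> V"
    "\<tau> x = deg V E x" "\<tau> y = deg V E y"
  shows "x \<in> D \<or> y \<in> D"
proof (rule ccontr)
  assume "\<not> ?thesis"
  moreover obtain K where "D \<subseteq> V" "(dyn_step V E \<tau> ^^ K) D = V"
    using assms(3) by (auto simp: is_dynamo_def)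
  ultimately show False
    using full_threshold_activated_after_neighbour[of V D K E \<tau> x y]
      full_threshold_activated_after_neighbour[of V D K E \<tau> y x] assms
    by (auto dest: sympD)
qed

definition is_matching :: "'a set \<Rightarrow> ('a \<Rightarrow> 'a \<Rightarrow> bool) \<Rightarrow> 'a set \<Rightarrow> ('a \<Rightarrow> 'a) \<Rightarrow> bool" where
  "is_matching V E D m \<longleftrightarrow> D \<subseteq> V \<and> m ` D \<subseteq> V \<and> inj_on m D \<and> m ` D \<inter> D = {}
     \<and> (\<forall>d\<in>D. E d (m d))"

lemma is_matching_mono: "is_matching V' E D m \<Longrightarrow> V' \<subseteq> V \<Longrightarrow> is_matching V E D m"
  by (auto simp: is_matching_def)

lemma is_matching_insert:
  assumes "is_matching V' E D m" "V' \<subseteq> V" "u \<in> V - V'" "v \<in> V - V'" "u \<noteq> v" "E u v"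
  shows "is_matching V E (insert u D) (m(u := v))"
proof -
  have "u \<notin> D" "v \<notin> D" "v \<notin> m ` D" "inj_on m D" using assms by (auto simp: is_matching_def)
  then have "inj_on (m(u := v)) (insert u D)" by (auto simp: inj_on_def)
  with assms show ?thesis by (auto simp: is_matching_def)
qed

lemma card_matching_le_dynamo:
  assumes fin: "finite V" and "symp E" and mt: "is_matching V E M m"
    and full: "\<And>w. w \<in> M \<union> m ` M \<Longrightarrow> \<tau> w = deg V E w"
    and dyn: "is_dynamo V E \<tau> D"
  shows "card M \<le> card D"
proof -
  define f where "f d = (if d \<in> D then d else m d)" for d
  have "d \<in> D \<or> m d \<in> D" if "d \<in> M" for d
    using dynamo_meets_full_threshold_edge[OF fin \<open>symp E\<close> dyn, of d "m d"] mt full that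
    by (auto simp: is_matching_def)
  then have "f ` M \<subseteq> D" by (auto simp: f_def)
  moreover have "inj_on f M"
    using mt unfolding is_matching_def inj_on_def f_def by (metis IntI empty_iff image_eqI)
  moreover have "finite D" using dyn fin finite_subset by (auto simp: is_dynamo_def)
  ultimately show ?thesis using card_inj_on_le by blast
qed

lemma deg_remove_vertex:
  assumes "finite V" "v \<in> V"
  shows "deg V E w = deg (V - {v}) E w + (if E w v then 1 else 0)"
proof -
  let ?N = "{x\<in>V. E w x}"
  have "{x\<in>V - {v}. E w x} = ?N - {v}" by auto
  moreover have "E w v \<Longrightarrow> card ?N = Suc (card (?N - {v}))"
    using assms by (intro card.remove) auto
  ultimately show ?thesis by (simp add: deg_def)
qed

lemma sum_deg_remove_vertex:
  assumes "finite V" "v \<in> V" "P \<subseteq> V"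
  shows "(\<Sum>w\<in>P. deg V E w) = (\<Sum>w\<in>P. deg (V - {v}) E w) + card {w\<in>P. E w v}"
proof -
  have "finite P" using assms finite_subset by blast
  then show ?thesis
    by (simp add: deg_remove_vertex[OF assms(1,2)] sum.distrib sum.If_cases Int_def)
qed

text \<open>Thresholds left once \<open>v\<close> is active; the truncated subtraction keeps a threshold \<open>0\<close> at \<open>0\<close>.\<close>

definition residual :: "('a \<Rightarrow> 'a \<Rightarrow> bool) \<Rightarrow> 'a \<Rightarrow> ('a \<Rightarrow> nat) \<Rightarrow> 'a \<Rightarrow> nat" where
  "residual E v \<tau> w = (if E w v then \<tau> w - 1 else \<tau> w)"

lemma residual_le_deg_remove_vertex:
  assumes "finite V" "v \<in> V" "\<tau> w \<le> deg V E w"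
  shows "residual E v \<tau> w \<le> deg (V - {v}) E w"
  using assms deg_remove_vertex[OF assms(1,2), of E w] by (auto simp: residual_def)

lemma sum_residual:
  assumes "finite A"
  shows "(\<Sum>w\<in>A. \<tau> w) = (\<Sum>w\<in>A. residual E v \<tau> w) + card {w\<in>A. E w v \<and> 0 < \<tau> w}"
proof -
  have "(\<Sum>w\<in>A. \<tau> w) = (\<Sum>w\<in>A. residual E v \<tau> w + (if E w v \<and> 0 < \<tau> w then 1 else 0))"
    by (rule sum.cong) (auto simp: residual_def)
  with assms show ?thesis by (simp add: sum.distrib sum.If_cases Int_def)
qed

lemma sum_deg_le_sum_residual:
  assumes fin: "finite V" and "v \<in> V" and P: "P \<subseteq> V - {v}"
    and pos: "\<And>w. w \<in> P \<Longrightarrow> 0 < residual E v \<tau> w"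
    and le: "(\<Sum>w\<in>P. deg (V - {v}) E w) \<le> (\<Sum>w\<in>V - {v}. residual E v \<tau> w)"
  shows "(\<Sum>w\<in>P. deg V E w) \<le> (\<Sum>w\<in>V - {v}. \<tau> w)"
proof -
  have "0 < \<tau> w" if "w \<in> P" for w using pos[OF that] by (simp add: residual_def split: if_splits)
  then have "card {w\<in>P. E w v} \<le> card {w\<in>V - {v}. E w v \<and> 0 < \<tau> w}"
    using fin P by (intro card_mono) auto
  moreover have "P \<subseteq> V" using P by blast
  ultimately show ?thesis
    using sum_deg_remove_vertex[OF fin \<open>v \<in> V\<close>, of P E] le sum_residual[of "V - {v}" \<tau> E v] fin
    by simp
qed

text \<open>The positivity clause lets the degree bound survive the passage to residual thresholds.\<close>

definition dynamo_certificate ::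
    "'a set \<Rightarrow> ('a \<Rightarrow> 'a \<Rightarrow> bool) \<Rightarrow> ('a \<Rightarrow> nat) \<Rightarrow> ('a \<Rightarrow> nat) \<Rightarrow> 'a set \<Rightarrow> ('a \<Rightarrow> 'a) \<Rightarrow> bool" where
  "dynamo_certificate V E \<tau> r D m \<longleftrightarrow> ranked_dynamo V E \<tau> r D \<and> is_matching V E D m
     \<and> (\<forall>w\<in>D \<union> m ` D. 0 < \<tau> w) \<and> (\<Sum>w\<in>D \<union> m ` D. deg V E w) \<le> (\<Sum>w\<in>V. \<tau> w)"

lemma dynamo_certificate_empty: "dynamo_certificate {} E \<tau> r {} m"
  by (simp add: dynamo_certificate_def ranked_dynamo_def is_matching_def)

lemma dynamo_certificate_insert_zero_threshold:
  assumes fin: "finite V" and v: "v \<in> V" and "\<tau> v = 0"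
    and cert: "dynamo_certificate (V - {v}) E (residual E v \<tau>) r D m"
  shows "dynamo_certificate V E \<tau> (\<lambda>w. if w = v then 0 else Suc (r w)) D m"
proof -
  let ?P = "D \<union> m ` D"
  have rd: "ranked_dynamo (V - {v}) E (residual E v \<tau>) r D"
    and mt: "is_matching (V - {v}) E D m"
    and pos: "\<And>w. w \<in> ?P \<Longrightarrow> 0 < residual E v \<tau> w"
    and le: "(\<Sum>w\<in>?P. deg (V - {v}) E w) \<le> (\<Sum>w\<in>V - {v}. residual E v \<tau> w)"
    using cert by (simp_all add: dynamo_certificate_def)
  have P: "?P \<subseteq> V - {v}" using mt by (auto simp: is_matching_def)
  then have "D - {v} = D" by blast
  with rd have "ranked_dynamo V E \<tau> (\<lambda>w. if w = v then 0 else Suc (r w)) D"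
    by (intro ranked_dynamo_insert[OF fin v]) (use P \<open>\<tau> v = 0\<close> in \<open>auto simp: residual_def\<close>)
  moreover have "is_matching V E D m" using mt by (rule is_matching_mono) blast
  moreover have "0 < \<tau> w" if "w \<in> ?P" for w
    using pos[OF that] by (simp add: residual_def split: if_splits)
  moreover have "(\<Sum>w\<in>?P. deg V E w) \<le> (\<Sum>w\<in>V - {v}. \<tau> w)"
    by (rule sum_deg_le_sum_residual[OF fin v P pos le])
  then have "(\<Sum>w\<in>?P. deg V E w) \<le> (\<Sum>w\<in>V. \<tau> w)"
    using fin v by (simp add: sum_diff1_nat \<open>\<tau> v = 0\<close>)
  ultimately show ?thesis by (simp add: dynamo_certificate_def)
qed

lemma dynamo_certificate_insert_leaf:
  assumes fin: "finite V" and v: "v \<in> V" and leaf: "{x\<in>V. E v x} = {u}"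
    and "symp E" "irreflp E" and "\<tau> v = 1"
    and cert: "dynamo_certificate (V - {v}) E \<tau> r D m"
  shows "dynamo_certificate V E \<tau> (r(v := Suc (r u))) D m"
proof -
  let ?P = "D \<union> m ` D"
  have rd: "ranked_dynamo (V - {v}) E \<tau> r D" and mt: "is_matching (V - {v}) E D m"
    and pos: "\<forall>w\<in>?P. 0 < \<tau> w" and le: "(\<Sum>w\<in>?P. deg (V - {v}) E w) \<le> (\<Sum>w\<in>V - {v}. \<tau> w)"
    using cert by (simp_all add: dynamo_certificate_def)
  have P: "?P \<subseteq> V - {v}" using mt by (auto simp: is_matching_def)
  have "u \<noteq> v" using leaf \<open>irreflp E\<close> by (auto dest: irreflpD)
  have "card {u} \<le> card {x\<in>V. E v x \<and> (r(v := Suc (r u))) x < (r(v := Suc (r u))) v}"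
    using fin leaf \<open>u \<noteq> v\<close> by (intro card_mono) auto
  moreover have "D - {v} = D" using P by blast
  ultimately have "ranked_dynamo V E \<tau> (r(v := Suc (r u))) D"
    using rd \<open>\<tau> v = 1\<close> by (intro ranked_dynamo_insert[OF fin v]) (use P in auto)
  moreover have "is_matching V E D m" using mt by (rule is_matching_mono) blast
  moreover have "{w\<in>?P. E w v} \<subseteq> {u}" using P leaf sympD[OF \<open>symp E\<close>] by blast
  then have "card {w\<in>?P. E w v} \<le> card {u}" by (intro card_mono) auto
  then have "(\<Sum>w\<in>?P. deg V E w) \<le> (\<Sum>w\<in>V - {v}. \<tau> w) + \<tau> v"
    using sum_deg_remove_vertex[OF fin v, of ?P E] P le \<open>\<tau> v = 1\<close> by force
  then have "(\<Sum>w\<in>?P. deg V E w) \<le> (\<Sum>w\<in>V. \<tau> w)"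
    using fin v by (simp add: sum.remove)
  ultimately show ?thesis using pos by (simp add: dynamo_certificate_def)
qed

lemma ranked_dynamo_insert_matched_leaf:
  assumes fin: "finite V" and v: "v \<in> V" and leaf: "{x\<in>V. E v x} = {u}" and "u \<noteq> v"
    and "\<tau> v = 1" and rd: "ranked_dynamo (V - {v} - {u}) E (residual E u \<tau>) r D"
  shows "ranked_dynamo V E \<tau> ((\<lambda>w. if w = u then 0 else Suc (Suc (r w)))(v := 1)) (insert u D)"
proof -
  let ?r = "\<lambda>w. if w = u then 0 else Suc (Suc (r w))"
  have u: "u \<in> V - {v}" using leaf \<open>u \<noteq> v\<close> by blast
  have D: "D \<subseteq> V - {v} - {u}" using rd by (simp add: ranked_dynamo_def)
  then have "insert u D - {u} = D" by blast
  with rd have "ranked_dynamo (V - {v}) E \<tau> ?r (insert u D)"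
    by (intro ranked_dynamo_insert[OF _ u]) (use fin D u in \<open>auto simp: residual_def\<close>)
  moreover have "insert u D - {v} = insert u D" using D \<open>u \<noteq> v\<close> by blast
  moreover have "card {u} \<le> card {x\<in>V. E v x \<and> (?r(v := 1)) x < (?r(v := 1)) v}"
    using fin leaf \<open>u \<noteq> v\<close> by (intro card_mono) auto
  ultimately show ?thesis
    using \<open>\<tau> v = 1\<close> D u by (intro ranked_dynamo_insert[OF fin v]) auto
qed

lemma dynamo_certificate_insert_matched_leaf:
  assumes fin: "finite V" and v: "v \<in> V" and leaf: "{x\<in>V. E v x} = {u}"
    and "symp E" "irreflp E" and "\<tau> v = 1" "\<tau> u = deg V E u"
    and cert: "dynamo_certificate (V - {v} - {u}) E (residual E u \<tau>) r D m"
  shows "dynamo_certificate V E \<tau> ((\<lambda>w. if w = u then 0 else Suc (Suc (r w)))(v := 1))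
           (insert u D) (m(u := v))"
proof -
  let ?V' = "V - {v} - {u}" and ?P = "D \<union> m ` D"
  have rd: "ranked_dynamo ?V' E (residual E u \<tau>) r D" and mt: "is_matching ?V' E D m"
    and pos: "\<And>w. w \<in> ?P \<Longrightarrow> 0 < residual E u \<tau> w"
    and le: "(\<Sum>w\<in>?P. deg (V - {v} - {u}) E w) \<le> (\<Sum>w\<in>?V'. residual E u \<tau> w)"
    using cert by (simp_all add: dynamo_certificate_def)
  have "E v u" "E u v" "u \<noteq> v" "u \<in> V"
    using leaf \<open>symp E\<close> \<open>irreflp E\<close> by (auto dest: sympD irreflpD)
  have P: "?P \<subseteq> ?V'" using mt by (auto simp: is_matching_def)
  then have "u \<notin> D" by blast
  then have P': "insert u D \<union> (m(u := v)) ` insert u D = insert u (insert v ?P)" by auto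
  have "(\<Sum>w\<in>?P. deg (V - {v}) E w) \<le> (\<Sum>w\<in>?V'. \<tau> w)"
    using sum_deg_le_sum_residual[of "V - {v}" u ?P E \<tau>] fin \<open>u \<in> V\<close> \<open>u \<noteq> v\<close> P pos le by simp
  moreover have "deg V E w = deg (V - {v}) E w" if "w \<in> ?P" for w
  proof -
    have "\<not> E w v" using that P leaf sympD[OF \<open>symp E\<close>] by blast
    then show ?thesis using deg_remove_vertex[OF fin v, of E w] by simp
  qed
  ultimately have "(\<Sum>w\<in>?P. deg V E w) \<le> (\<Sum>w\<in>?V'. \<tau> w)" by simp
  moreover have "deg V E v = 1" using leaf by (simp add: deg_def)
  moreover have "(\<Sum>w\<in>V. \<tau> w) = \<tau> v + \<tau> u + (\<Sum>w\<in>?V'. \<tau> w)"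
    using fin v \<open>u \<in> V\<close> \<open>u \<noteq> v\<close> by (simp add: sum.remove)
  moreover have "finite ?P" "u \<notin> ?P" "v \<notin> ?P" using P fin finite_subset by blast+
  ultimately have "(\<Sum>w\<in>insert u (insert v ?P). deg V E w) \<le> (\<Sum>w\<in>V. \<tau> w)"
    using P \<open>u \<noteq> v\<close> \<open>\<tau> v = 1\<close> \<open>\<tau> u = deg V E u\<close> by auto
  moreover have "0 < deg V E u" using fin \<open>E u v\<close> v by (auto simp: deg_def card_gt_0_iff)
  moreover have "0 < \<tau> w" if "w \<in> ?P" for w
    using pos[OF that] by (simp add: residual_def split: if_splits)
  moreover have "is_matching V E (insert u D) (m(u := v))"
    using mt v \<open>u \<in> V\<close> \<open>u \<noteq> v\<close> \<open>E u v\<close> by (intro is_matching_insert) auto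
  moreover have "ranked_dynamo V E \<tau> ((\<lambda>w. if w = u then 0 else Suc (Suc (r w)))(v := 1)) (insert u D)"
    by (rule ranked_dynamo_insert_matched_leaf[OF fin v leaf \<open>u \<noteq> v\<close> \<open>\<tau> v = 1\<close> rd])
  ultimately show ?thesis
    using \<open>\<tau> v = 1\<close> \<open>\<tau> u = deg V E u\<close> unfolding dynamo_certificate_def P' by auto
qed

lemma leaf_with_unit_threshold:
  assumes "finite V" "V \<noteq> {}" "symp E" "irreflp E" "\<not> has_cycle V E"
    and "\<And>w. w \<in> V \<Longrightarrow> 0 < \<tau> w \<and> \<tau> w \<le> deg V E w"
  obtains v u where "v \<in> V" "{x\<in>V. E v x} = {u}" "\<tau> v = 1"
proof -
  obtain v where v: "v \<in> V" "deg V E v \<le> 1" using acyclic_graph_has_leaf assms(1-5) by blast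
  with assms(6) have "\<tau> v = 1" "deg V E v = 1" by force+
  then show thesis using that v(1) by (auto simp: deg_def card_1_singleton_iff)
qed

lemma leaf_neighbour_facts:
  assumes "{x\<in>V. E v x} = {u}" "symp E" "irreflp E"
  shows "u \<in> V" "u \<noteq> v" "\<And>w. w \<in> V - {v} - {u} \<Longrightarrow> \<not> E w v"
  using assms by (auto dest: sympD irreflpD)

lemma threshold_le_deg_remove_leaf:
  assumes "finite V" "v \<in> V" "{x\<in>V. E v x} = {u}" "symp E" "irreflp E"
    and "\<And>w. w \<in> V \<Longrightarrow> \<tau> w \<le> deg V E w" and "\<tau> u < deg V E u" and "w \<in> V - {v}"
  shows "\<tau> w \<le> deg (V - {v}) E w"
proof (cases "w = u")
  case True
  then show ?thesis using assms(7) deg_remove_vertex[OF assms(1,2), of E u] by (simp split: if_splits)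
next
  case False
  then have "\<not> E w v" using leaf_neighbour_facts(3)[OF assms(3-5)] assms(8) by blast
  then show ?thesis using assms(6)[of w] assms(8) deg_remove_vertex[OF assms(1,2), of E w] by simp
qed

lemma residual_le_deg_remove_matched_leaf:
  assumes "finite V" "v \<in> V" "{x\<in>V. E v x} = {u}" "symp E" "irreflp E"
    and "\<And>w. w \<in> V \<Longrightarrow> \<tau> w \<le> deg V E w" and "w \<in> V - {v} - {u}"
  shows "residual E u \<tau> w \<le> deg (V - {v} - {u}) E w"
proof -
  note u = leaf_neighbour_facts[OF assms(3-5)]
  have "\<tau> w \<le> deg V E w" using assms(6,7) by blast
  then have "\<tau> w \<le> deg (V - {v}) E w"
    using assms(7) deg_remove_vertex[OF assms(1,2), of E w] u(3)[of w] by simp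
  then show ?thesis using assms u by (intro residual_le_deg_remove_vertex) auto
qed

lemma acyclic_dynamo_certificate_exists:
  assumes "finite V" and "symp E" and "irreflp E" and "\<not> has_cycle V E"
    and "\<forall>w\<in>V. \<tau> w \<le> deg V E w"
  shows "\<exists>r D m. dynamo_certificate V E \<tau> r D m"
  using assms(1,4,5)
proof (induction "card V" arbitrary: V \<tau> rule: less_induct)
  case less
  have fin: "finite V" and thr: "\<And>w. w \<in> V \<Longrightarrow> \<tau> w \<le> deg V E w" using less.prems by auto
  have IH: "\<exists>r D m. dynamo_certificate V' E \<tau>' r D m"
    if "V' \<subset> V" "\<And>w. w \<in> V' \<Longrightarrow> \<tau>' w \<le> deg V' E w" for V' \<tau>'
    using less.hyps[of V' \<tau>'] less.prems that psubset_card_mono[OF fin] finite_subset has_cycle_mono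
    by (metis less_imp_le)
  consider "V = {}" | v where "v \<in> V" "\<tau> v = 0"
    | v u where "v \<in> V" "{x\<in>V. E v x} = {u}" "\<tau> v = 1"
  proof (cases "V = {} \<or> (\<exists>v\<in>V. \<tau> v = 0)")
    case True
    then show thesis using that(1,2) by blast
  next
    case False
    then have "\<And>w. w \<in> V \<Longrightarrow> 0 < \<tau> w \<and> \<tau> w \<le> deg V E w" using thr by auto
    with False obtain v u where "v \<in> V" "{x\<in>V. E v x} = {u}" "\<tau> v = 1"
      using leaf_with_unit_threshold[OF fin _ assms(2,3) less.prems(2)] by blast
    then show thesis by (rule that(3))
  qed
  then show ?case
  proof cases
    case 1
    then show ?thesis using dynamo_certificate_empty by blast
  next
    case (2 v)
    then have "\<exists>r D m. dynamo_certificate (V - {v}) E (residual E v \<tau>) r D m"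
      using thr residual_le_deg_remove_vertex[OF fin] by (intro IH) auto
    then show ?thesis using dynamo_certificate_insert_zero_threshold[of V v \<tau>, OF fin 2] by blast
  next
    case (3 v u)
    note leaf = "3"(1,2) assms(2,3)
    show ?thesis
    proof (cases "\<tau> u = deg V E u")
      case True
      have "\<exists>r D m. dynamo_certificate (V - {v} - {u}) E (residual E u \<tau>) r D m"
        using residual_le_deg_remove_matched_leaf[OF fin leaf thr] "3"(1) by (intro IH) auto
      then show ?thesis
        using dynamo_certificate_insert_matched_leaf[OF fin leaf \<open>\<tau> v = 1\<close> True] by blast
    next
      case False
      with thr leaf_neighbour_facts(1)[OF leaf(2-4)] have "\<tau> u < deg V E u" by force
      then have "\<exists>r D m. dynamo_certificate (V - {v}) E \<tau> r D m"
        using threshold_le_deg_remove_leaf[OF fin leaf thr] "3"(1) by (intro IH) auto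
      then show ?thesis
        using dynamo_certificate_insert_leaf[where \<tau> = \<tau>, OF fin leaf \<open>\<tau> v = 1\<close>] by blast
    qed
  qed
qed

lemma dyn_le_card: "is_dynamo V E \<tau> D \<Longrightarrow> dyn V E \<tau> \<le> card D"
  unfolding dyn_def by (rule Least_le) blast

lemma is_dynamo_self: "is_dynamo V E \<tau> V"
  unfolding is_dynamo_def by (auto intro: exI[of _ 0])

lemma dyn_attained: "\<exists>D. is_dynamo V E \<tau> D \<and> card D = dyn V E \<tau>"
  unfolding dyn_def by (rule LeastI_ex) (use is_dynamo_self in blast)

lemma finite_dyn_values: "finite {dyn V E \<tau> | \<tau>. P \<tau>}"
  by (rule finite_subset[of _ "{..card V}"]) (auto intro: dyn_le_card is_dynamo_self)

lemma dyn_le_Ldyn: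
  "threshold_assignment V E \<tau> \<Longrightarrow> avg_tau V \<tau> \<le> t \<Longrightarrow> dyn V E \<tau> \<le> Ldyn V E t"
  unfolding Ldyn_def by (rule Max_ge[OF finite_dyn_values]) blast

lemma Ldyn_attained:
  assumes "0 \<le> t"
  shows "\<exists>\<tau>. threshold_assignment V E \<tau> \<and> avg_tau V \<tau> \<le> t \<and> dyn V E \<tau> = Ldyn V E t"
proof -
  have "dyn V E (\<lambda>_. 0) \<in> {dyn V E \<tau> | \<tau>. threshold_assignment V E \<tau> \<and> avg_tau V \<tau> \<le> t}"
    using assms by (auto simp: threshold_assignment_def avg_tau_def)
  then have "Ldyn V E t \<in> {dyn V E \<tau> | \<tau>. threshold_assignment V E \<tau> \<and> avg_tau V \<tau> \<le> t}"
    unfolding Ldyn_def by (intro Max_in finite_dyn_values) blast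
  then show ?thesis by auto
qed

lemma avg_tau_mono: "(\<Sum>w\<in>V. \<sigma> w) \<le> (\<Sum>w\<in>V. \<tau> w) \<Longrightarrow> avg_tau V \<sigma> \<le> avg_tau V \<tau>"
  unfolding avg_tau_def by (intro divide_right_mono) (simp_all flip: of_nat_sum)

theorem theorem2:
  fixes V :: "'a set" and E :: "'a \<Rightarrow> 'a \<Rightarrow> bool" and t :: real
  assumes "forest V E" and "t > 0"
  shows "\<exists>\<tau>'. threshold_assignment V E \<tau>' \<and> zero_degree_assignment V E \<tau>'
           \<and> avg_tau V \<tau>' \<le> t \<and> Ldyn V E t = dyn V E \<tau>'"
proof -
  have fin: "finite V" and "symp E" "irreflp E" "\<not> has_cycle V E"
    using assms(1) unfolding forest_def simple_graph_def symp_def irreflp_def by blast+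
  obtain \<tau> where \<tau>: "threshold_assignment V E \<tau>" "avg_tau V \<tau> \<le> t" "dyn V E \<tau> = Ldyn V E t"
    using Ldyn_attained assms(2) by (metis less_imp_le)
  moreover have "\<forall>w\<in>V. \<tau> w \<le> deg V E w" using \<tau>(1) by (simp add: threshold_assignment_def)
  ultimately obtain r D m where cert: "dynamo_certificate V E \<tau> r D m"
    using acyclic_dynamo_certificate_exists[OF fin \<open>symp E\<close> \<open>irreflp E\<close> \<open>\<not> has_cycle V E\<close>]
    by blast
  let ?P = "D \<union> m ` D"
  define \<tau>' where "\<tau>' w = (if w \<in> ?P then deg V E w else 0)" for w
  have th': "threshold_assignment V E \<tau>'" and "zero_degree_assignment V E \<tau>'"
    by (simp_all add: threshold_assignment_def zero_degree_assignment_def \<tau>'_def)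
  have "?P \<subseteq> V" using cert by (auto simp: dynamo_certificate_def is_matching_def)
  then have "(\<Sum>w\<in>V. \<tau>' w) = (\<Sum>w\<in>?P. deg V E w)"
    using sum.inter_restrict[OF fin, of "deg V E" ?P] by (simp add: \<tau>'_def Int_absorb1)
  then have avg': "avg_tau V \<tau>' \<le> t"
    using cert \<tau>(2) avg_tau_mono[of \<tau>' V \<tau>] by (simp add: dynamo_certificate_def)
  have "ranked_dynamo V E \<tau> r D" using cert by (simp add: dynamo_certificate_def)
  then have "Ldyn V E t \<le> card D" using \<tau>(3) is_dynamo_if_ranked[OF fin] dyn_le_card by metis
  also obtain D' where "is_dynamo V E \<tau>' D'" "card D' = dyn V E \<tau>'" using dyn_attained by blast
  then have "card D \<le> dyn V E \<tau>'"
    using card_matching_le_dynamo[OF fin \<open>symp E\<close>, of D m \<tau>' D'] cert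
    by (simp add: dynamo_certificate_def \<tau>'_def)
  also have "dyn V E \<tau>' \<le> Ldyn V E t" using th' avg' by (rule dyn_le_Ldyn)
  finally show ?thesis using th' \<open>zero_degree_assignment V E \<tau>'\<close> avg' by auto
qed

end
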